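(* Let $G$ be a connected bipartite graph with bipartition $V(G)=X \cup Y$, $|X|=s$ and $|Y|=t$, let $m$ be the number of edges and $\beta$ the matching number of $G$. If $0\leq \alpha \leq 1$, then $$S_k(A_{\alpha}(G))\geq \frac{\alpha m}{2}\left(\frac{1}{s}+\frac{1}{t}\right)+\frac{(1-\alpha)m}{\sqrt{st}}+(k-1)\left(\alpha -\frac{2(1-\alpha)\sqrt{st}}{s+t}\right)$$ for $1\leq k \leq \beta+1$.
   Context: All graphs are simple and undirected. $A_{\alpha}(G)=\alpha D(G)+(1-\alpha)A(G)$, where $A(G)$ is the adjacency matrix and $D(G)$ the diagonal degree matrix. For a real symmetric matrix $M$ with eigenvalues $\lambda_1(M)\geq\cdots\geq\lambda_n(M)$, $S_k(M)=\sum_{i=1}^k\lambda_i(M)$. The matching number is the maximum size of a matching. *)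

theory Defs
  imports "Jordan_Normal_Form.Char_Poly" "HOL-Library.Multiset"
begin

definition simple_graph :: "nat \<Rightarrow> nat set set \<Rightarrow> bool" where
  "simple_graph n E \<longleftrightarrow> (\<forall>e\<in>E. \<exists>u v. e = {u, v} \<and> u \<noteq> v \<and> u < n \<and> v < n)"

definition adj :: "nat set set \<Rightarrow> nat \<Rightarrow> nat \<Rightarrow> bool" where
  "adj E u v \<longleftrightarrow> {u, v} \<in> E"

definition degree :: "nat set set \<Rightarrow> nat \<Rightarrow> nat" where
  "degree E v = card {e\<in>E. v \<in> e}"

definition connected_graph :: "nat \<Rightarrow> nat set set \<Rightarrow> bool" where
  "connected_graph n E \<longleftrightarrow> n \<ge> 1 \<and> (\<forall>u<n. \<forall>v<n. (adj E)\<^sup>*\<^sup>* u v)"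

definition bipartition :: "nat \<Rightarrow> nat set set \<Rightarrow> nat set \<Rightarrow> nat set \<Rightarrow> bool" where
  "bipartition n E X Y \<longleftrightarrow> X \<union> Y = {0..<n} \<and> X \<inter> Y = {} \<and>
     (\<forall>e\<in>E. card (e \<inter> X) = 1 \<and> card (e \<inter> Y) = 1)"

definition is_matching :: "nat set set \<Rightarrow> nat set set \<Rightarrow> bool" where
  "is_matching E M \<longleftrightarrow> M \<subseteq> E \<and> (\<forall>e\<in>M. \<forall>f\<in>M. e \<noteq> f \<longrightarrow> e \<inter> f = {})"

definition matching_number :: "nat set set \<Rightarrow> nat" where
  "matching_number E = Max (card ` {M. is_matching E M})"

definition adj_matrix :: "nat \<Rightarrow> nat set set \<Rightarrow> real mat" where
  "adj_matrix n E = mat n n (\<lambda>(i, j). if {i, j} \<in> E then 1 else 0)"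

definition deg_matrix :: "nat \<Rightarrow> nat set set \<Rightarrow> real mat" where
  "deg_matrix n E = mat n n (\<lambda>(i, j). if i = j then real (degree E i) else 0)"

definition A_alpha :: "real \<Rightarrow> nat \<Rightarrow> nat set set \<Rightarrow> real mat" where
  "A_alpha \<alpha> n E = \<alpha> \<cdot>\<^sub>m deg_matrix n E + (1 - \<alpha>) \<cdot>\<^sub>m adj_matrix n E"

text \<open>Eigenvalues (with multiplicity) of a real symmetric matrix, in non-increasing
  order: the roots of the characteristic polynomial (which splits over the reals).\<close>

definition eigenvalues_desc :: "real mat \<Rightarrow> real list" where
  "eigenvalues_desc M = rev (sorted_list_of_multiset (proots (char_poly M)))"

definition S_k :: "nat \<Rightarrow> real mat \<Rightarrow> real" where
  "S_k k M = sum_list (take k (eigenvalues_desc M))"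

end

(*
  Ky Fan's principle: for a real symmetric matrix M and orthonormal vectors x_1, ..., x_k,
  the sum of the k largest eigenvalues of M is at least the sum of the x_i^T M x_i.  Expanding
  the x_i in an orthonormal eigenbasis turns the right-hand side into a combination of the
  eigenvalues with weights in [0, 1] summing to k (Bessel's inequality).  The eigenbasis is
  built one vector at a time: if K projects onto the span of the eigenvectors found so far,
  then M commutes with K, and comparing traces shows that one of the symmetric matrices
  M - M K + c K (c = 0, 1) has an eigenvalue different from c, whose eigenvectors are
  eigenvectors of M orthogonal to the previous ones.

  For the bound, apply Ky Fan to A_alpha(G) and the following k orthonormal test vectors: the
  vector with entries 1/sqrt(2s) on X and 1/sqrt(2t) on Y, whose quadratic form is
  m (alpha (1/(2s) + 1/(2t)) + (1 - alpha)/sqrt(st)), and, for each edge uw of a matching of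
  size k - 1 (u in X), the vector sqrt(s/(s+t)) e_u - sqrt(t/(s+t)) e_w.  The quadratic form of
  the latter is at least alpha - 2 (1 - alpha) sqrt(st)/(s+t), since only its own edge
  contributes a negative term.
*)
theory Submission
  imports Defs "Jordan_Normal_Form.Schur_Decomposition" "HOL-Combinatorics.Permutations"
begin

section \<open>Real symmetric matrices\<close>

lemma hermitian_form_real:
  fixes N :: "real mat" and v :: "complex vec"
  assumes N: "N \<in> carrier_mat n n" and sym: "transpose_mat N = N"
  shows "cnj (\<Sum>i<n. cnj (v$i) * (\<Sum>j<n. of_real (N$$(i,j)) * v$j))
       = (\<Sum>i<n. cnj (v$i) * (\<Sum>j<n. of_real (N$$(i,j)) * v$j))"
proof -
  have Nij: "N$$(j,i) = N$$(i,j)" if "i < n" "j < n" for i j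
    using arg_cong[OF sym, of "\<lambda>A. A$$(i,j)"] that N by simp
  have "cnj (\<Sum>i<n. cnj (v$i) * (\<Sum>j<n. of_real (N$$(i,j)) * v$j))
      = (\<Sum>i<n. \<Sum>j<n. v$i * of_real (N$$(i,j)) * cnj (v$j))"
    by (simp add: sum_distrib_left algebra_simps)
  also have "\<dots> = (\<Sum>j<n. \<Sum>i<n. v$i * of_real (N$$(i,j)) * cnj (v$j))"
    by (rule sum.swap)
  also have "\<dots> = (\<Sum>i<n. cnj (v$i) * (\<Sum>j<n. of_real (N$$(i,j)) * v$j))"
    by (auto simp: sum_distrib_left algebra_simps Nij intro!: sum.cong)
  finally show ?thesis .
qed

lemma symmetric_char_poly_root_real:
  fixes N :: "real mat" and \<mu> :: complex
  assumes N: "N \<in> carrier_mat n n" and sym: "transpose_mat N = N"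
    and root: "poly (char_poly (map_mat complex_of_real N)) \<mu> = 0"
  shows "Im \<mu> = 0"
proof -
  define Nc where "Nc = map_mat complex_of_real N"
  have Nc: "Nc \<in> carrier_mat n n" using N unfolding Nc_def by auto
  have "eigenvalue Nc \<mu>" using root eigenvalue_root_char_poly[OF Nc] unfolding Nc_def by auto
  then obtain v where v: "v \<in> carrier_vec n" "v \<noteq> 0\<^sub>v n" "Nc *\<^sub>v v = \<mu> \<cdot>\<^sub>v v"
    unfolding eigenvalue_def eigenvector_def using Nc by auto
  define s where "s = (\<Sum>i<n. cnj (v$i) * (\<Sum>j<n. of_real (N$$(i,j)) * v$j))"
  define r where "r = (\<Sum>i<n. (cmod (v$i))\<^sup>2)"
  have Nv: "(\<Sum>j<n. of_real (N$$(i,j)) * v$j) = \<mu> * v$i" if "i < n" for i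
  proof -
    have "(Nc *\<^sub>v v) $ i = \<mu> * v $ i" using v(3) that v(1) by simp
    then show ?thesis using that Nc v(1) N unfolding Nc_def by (simp add: scalar_prod_def atLeast0LessThan)
  qed
  have "s = (\<Sum>i<n. cnj (v$i) * (\<mu> * v$i))" unfolding s_def by (intro sum.cong) (auto simp: Nv)
  also have "\<dots> = \<mu> * of_real r"
    unfolding r_def of_real_sum complex_norm_square sum_distrib_left
    by (intro sum.cong) (auto simp: mult_ac)
  finally have "s = \<mu> * of_real r" .
  moreover have "cnj s = s" unfolding s_def by (rule hermitian_form_real[OF N sym])
  moreover have "r > 0"
  proof -
    obtain i where i: "i < n" "v $ i \<noteq> 0" using v(1,2) by (auto simp: vec_eq_iff)
    have "(cmod (v$i))\<^sup>2 \<le> r" unfolding r_def by (rule member_le_sum) (use i in auto)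
    moreover have "(cmod (v$i))\<^sup>2 > 0" using i by simp
    ultimately show ?thesis by linarith
  qed
  ultimately have "cnj \<mu> = \<mu>"
    by (metis complex_cnj_complex_of_real complex_cnj_mult mult_cancel_right of_real_eq_0_iff less_irrefl)
  then show ?thesis by (metis Reals_cnj_iff complex_is_Real_iff)
qed

lemma symmetric_char_poly_splits:
  fixes N :: "real mat"
  assumes N: "N \<in> carrier_mat n n" and sym: "transpose_mat N = N"
  shows "\<exists>as. char_poly N = (\<Prod>a\<leftarrow>as. [:-a, 1:]) \<and> length as = n"
proof -
  let ?Nc = "map_mat complex_of_real N"
  obtain cs where cs: "char_poly ?Nc = (\<Prod>a\<leftarrow>cs. [:-a, 1:])" "length cs = n"
    using char_poly_factorized[of ?Nc n] N by auto
  have real: "Im a = 0" if "a \<in> set cs" for a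
    using symmetric_char_poly_root_real[OF N sym] linear_poly_root[OF that] cs(1) by metis
  define as where "as = map Re cs"
  have "complex_of_real (poly (char_poly N) x) = complex_of_real (poly (\<Prod>a\<leftarrow>as. [:-a, 1:]) x)" for x
  proof -
    have "complex_of_real (poly (char_poly N) x) = poly (char_poly ?Nc) (of_real x)"
      by (simp only: of_real_hom.char_poly_hom[OF N] of_real_hom.poly_map_poly)
    also have "\<dots> = (\<Prod>a\<leftarrow>cs. of_real x - a)" unfolding cs(1) poly_prod_list by (simp add: o_def)
    also have "\<dots> = complex_of_real (\<Prod>a\<leftarrow>as. x - a)" unfolding as_def using real
      by (induct cs) (auto simp: complex_eq_iff)
    finally show ?thesis by (simp add: poly_prod_list o_def)
  qed
  then have "char_poly N = (\<Prod>a\<leftarrow>as. [:-a, 1:])" by (intro poly_ext) (simp only: of_real_eq_iff)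
  moreover have "length as = n" using cs(2) by (simp add: as_def)
  ultimately show ?thesis by blast
qed

definition mat_trace :: "'a::comm_ring_1 mat \<Rightarrow> 'a" where
  "mat_trace A = (\<Sum>i<dim_row A. A$$(i,i))"

lemma mat_trace_mult_comm:
  assumes "A \<in> carrier_mat n m" and "B \<in> carrier_mat m n"
  shows "mat_trace (A * B) = mat_trace (B * A)"
proof -
  have "mat_trace (A * B) = (\<Sum>i<n. \<Sum>k<m. A$$(i,k) * B$$(k,i))"
    unfolding mat_trace_def using assms by (simp add: scalar_prod_def atLeast0LessThan)
  also have "\<dots> = (\<Sum>k<m. \<Sum>i<n. B$$(k,i) * A$$(i,k))"
    by (subst sum.swap) (simp add: mult.commute)
  also have "\<dots> = mat_trace (B * A)"
    unfolding mat_trace_def using assms by (simp add: scalar_prod_def atLeast0LessThan)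
  finally show ?thesis .
qed

lemma mat_trace_add_smult:
  assumes "A \<in> carrier_mat n n" and "B \<in> carrier_mat n n"
  shows "mat_trace (A + c \<cdot>\<^sub>m B) = mat_trace A + c * mat_trace B"
  unfolding mat_trace_def using assms by (simp add: sum.distrib sum_distrib_left)

lemma mat_trace_eq_sum_eigenvalues:
  fixes A :: "'a::conjugatable_ordered_field mat"
  assumes A: "A \<in> carrier_mat n n" and cp: "char_poly A = (\<Prod>a\<leftarrow>as. [:-a, 1:])"
  shows "mat_trace A = sum_list as"
proof -
  obtain B P Q where "schur_decomposition A as = (B, P, Q)" by (cases "schur_decomposition A as")
  from schur_decomposition[OF A cp this]
  have sim: "similar_mat_wit A B P Q" and diag: "diag_mat B = as" by auto
  from sim A have B: "B \<in> carrier_mat n n" and P: "P \<in> carrier_mat n n" and Q: "Q \<in> carrier_mat n n"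
    and QP: "Q * P = 1\<^sub>m n" and AB: "A = P * B * Q"
    unfolding similar_mat_wit_def Let_def by auto
  have "mat_trace A = mat_trace (P * (B * Q))" using AB P B Q by simp
  also have "\<dots> = mat_trace ((B * Q) * P)" by (rule mat_trace_mult_comm) (use P B Q in auto)
  also have "\<dots> = mat_trace B" using B Q P QP by simp
  also have "\<dots> = sum_list (diag_mat B)"
    unfolding mat_trace_def diag_mat_def sum_list_sum_nth using B by (simp add: atLeast0LessThan)
  finally show ?thesis using diag by simp
qed

lemma symmetric_eigenvalue_neq_of_trace:
  fixes N :: "real mat"
  assumes N: "N \<in> carrier_mat n n" and sym: "transpose_mat N = N"
    and tr: "mat_trace N \<noteq> c * real n"
  shows "\<exists>a v. a \<noteq> c \<and> v \<in> carrier_vec n \<and> v \<noteq> 0\<^sub>v n \<and> N *\<^sub>v v = a \<cdot>\<^sub>v v"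
proof -
  obtain as where cp: "char_poly N = (\<Prod>a\<leftarrow>as. [:-a, 1:])" and len: "length as = n"
    using symmetric_char_poly_splits[OF N sym] by blast
  obtain a where a: "a \<in> set as" "a \<noteq> c"
  proof (rule ccontr)
    assume "\<not> thesis"
    with that have "as = replicate n c" using len by (metis replicate_length_same)
    with mat_trace_eq_sum_eigenvalues[OF N cp] tr show False by (simp add: sum_list_replicate)
  qed
  have "eigenvalue N a"
    using eigenvalue_root_char_poly[OF N] linear_poly_root[OF a(1)] cp by simp
  then show ?thesis using a(2) N unfolding eigenvalue_def eigenvector_def by auto
qed

lemma smult_mat_mult_vec:
  fixes A :: "'a::comm_ring mat"
  assumes "A \<in> carrier_mat nr nc" and "v \<in> carrier_vec nc"
  shows "(c \<cdot>\<^sub>m A) *\<^sub>v v = c \<cdot>\<^sub>v (A *\<^sub>v v)"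
  using assms by (intro eq_vecI) (auto simp: scalar_prod_def sum_distrib_left ac_simps)

text \<open>For a projection K commuting with M, the deflation acts as the scalar c on the range of K
  and as M on its kernel; an eigenvalue other than c therefore yields an eigenvector of M in the
  kernel of K.\<close>

definition deflation :: "real mat \<Rightarrow> real mat \<Rightarrow> real \<Rightarrow> real mat" where
  "deflation M K c = M - M * K + c \<cdot>\<^sub>m K"

lemma deflation_carrier:
  "M \<in> carrier_mat n n \<Longrightarrow> K \<in> carrier_mat n n \<Longrightarrow> deflation M K c \<in> carrier_mat n n"
  unfolding deflation_def by simp

lemma mat_trace_deflation:
  assumes "M \<in> carrier_mat n n" and "K \<in> carrier_mat n n"
  shows "mat_trace (deflation M K c) = mat_trace (M - M * K) + c * mat_trace K"
  unfolding deflation_def using assms by (intro mat_trace_add_smult) auto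

lemma deflation_symmetric:
  assumes M: "M \<in> carrier_mat n n" "transpose_mat M = M"
    and K: "K \<in> carrier_mat n n" "transpose_mat K = K" and comm: "M * K = K * M"
  shows "transpose_mat (deflation M K c) = deflation M K c"
proof -
  have MK: "M - M * K \<in> carrier_mat n n" using M K by (simp add: minus_carrier_mat)
  have "transpose_mat (M * K) = M * K" using transpose_mult[OF M(1) K(1)] M K comm by simp
  moreover have "transpose_mat (c \<cdot>\<^sub>m K) = c \<cdot>\<^sub>m transpose_mat K" by (intro eq_matI) auto
  moreover have "transpose_mat (M - M * K + c \<cdot>\<^sub>m K)
      = transpose_mat M - transpose_mat (M * K) + transpose_mat (c \<cdot>\<^sub>m K)"
    using transpose_add[of "M - M * K" n n "c \<cdot>\<^sub>m K"] transpose_minus[of M n n "M * K"] M K MK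
    by simp
  ultimately show ?thesis unfolding deflation_def using M K by simp
qed

lemma deflation_eigenvector:
  assumes M: "M \<in> carrier_mat n n" and K: "K \<in> carrier_mat n n" "K * K = K"
    and comm: "M * K = K * M" and v: "v \<in> carrier_vec n"
    and Nv: "deflation M K c *\<^sub>v v = a \<cdot>\<^sub>v v" and a: "a \<noteq> c"
  shows "K *\<^sub>v v = 0\<^sub>v n" and "M *\<^sub>v v = a \<cdot>\<^sub>v v"
proof -
  have MK: "M * K \<in> carrier_mat n n" and D: "M - M * K \<in> carrier_mat n n"
    and N: "deflation M K c \<in> carrier_mat n n"
    using M K by (auto simp: minus_carrier_mat deflation_carrier)
  have "K * deflation M K c = K * M - K * (M * K) + c \<cdot>\<^sub>m (K * K)"
    unfolding deflation_def using M K MK D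
    by (simp add: mult_add_distrib_mat[of K n n] mult_minus_distrib_mat[of K n n] mult_smult_distrib)
  moreover have "K * (M * K) = K * M" using M K comm by (metis assoc_mult_mat)
  moreover have "K * M \<in> carrier_mat n n" using M K by simp
  ultimately have "K * deflation M K c = c \<cdot>\<^sub>m K" using K by simp
  then have eq: "c \<cdot>\<^sub>v (K *\<^sub>v v) = a \<cdot>\<^sub>v (K *\<^sub>v v)"
    using assoc_mult_mat_vec[OF K(1) N v] Nv mult_mat_vec[OF K(1) v] K v
    by (simp add: smult_mat_mult_vec)
  show Kv: "K *\<^sub>v v = 0\<^sub>v n"
  proof (rule eq_vecI)
    fix i assume i: "i < dim_vec (0\<^sub>v n :: real vec)"
    have "c * (K *\<^sub>v v) $ i = a * (K *\<^sub>v v) $ i" using arg_cong[OF eq, of "\<lambda>w. w $ i"] i K by simp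
    then show "(K *\<^sub>v v) $ i = 0\<^sub>v n $ i" using a i by simp
  qed (use K in simp)
  have "deflation M K c *\<^sub>v v = M *\<^sub>v v - (M * K) *\<^sub>v v + c \<cdot>\<^sub>v (K *\<^sub>v v)"
    unfolding deflation_def using M K MK D v
    by (simp add: add_mult_distrib_mat_vec[OF D _ v] minus_mult_distrib_mat_vec[OF M MK v]
        smult_mat_mult_vec)
  also have "\<dots> = M *\<^sub>v v" using M K v Kv by (intro eq_vecI) auto
  finally show "M *\<^sub>v v = a \<cdot>\<^sub>v v" using Nv by simp
qed

lemma commuting_projection_kernel_eigenvector:
  fixes M K :: "real mat"
  assumes M: "M \<in> carrier_mat n n" "transpose_mat M = M"
    and K: "K \<in> carrier_mat n n" "transpose_mat K = K" "K * K = K"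
    and comm: "M * K = K * M" and tr: "mat_trace K \<noteq> real n"
  shows "\<exists>a v. v \<in> carrier_vec n \<and> v \<noteq> 0\<^sub>v n \<and> K *\<^sub>v v = 0\<^sub>v n \<and> M *\<^sub>v v = a \<cdot>\<^sub>v v"
proof -
  obtain c where "mat_trace (deflation M K c) \<noteq> c * real n"
    using mat_trace_deflation[OF M(1) K(1), of 0] mat_trace_deflation[OF M(1) K(1), of 1] tr by force
  then obtain a v where "a \<noteq> c" "v \<in> carrier_vec n" "v \<noteq> 0\<^sub>v n" "deflation M K c *\<^sub>v v = a \<cdot>\<^sub>v v"
    using symmetric_eigenvalue_neq_of_trace[OF deflation_carrier[OF M(1) K(1)]
        deflation_symmetric[OF M K(1,2) comm]] by blast
  then show ?thesis using deflation_eigenvector[OF M(1) K(1,3) comm] by blast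
qed

section \<open>The spectral theorem\<close>

definition orthonormal :: "nat \<Rightarrow> real vec list \<Rightarrow> bool" where
  "orthonormal n us \<longleftrightarrow> set us \<subseteq> carrier_vec n \<and>
     (\<forall>i<length us. \<forall>j<length us. us!i \<bullet> us!j = (if i = j then 1 else 0))"

definition eigenpairs :: "real mat \<Rightarrow> real vec list \<Rightarrow> real list \<Rightarrow> bool" where
  "eigenpairs M us ls \<longleftrightarrow> length ls = length us \<and> (\<forall>i<length us. M *\<^sub>v us!i = ls!i \<cdot>\<^sub>v us!i)"

lemma orthonormal_gram:
  assumes "orthonormal n us"
  shows "transpose_mat (mat_of_cols n us) * mat_of_cols n us = 1\<^sub>m (length us)"
  using assms unfolding orthonormal_def
  by (intro eq_matI) (auto simp: col_mat_of_cols subset_code(1))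

lemma orthonormal_snoc:
  assumes o: "orthonormal n us" and u: "u \<in> carrier_vec n" "u \<bullet> u = 1"
    and orth: "\<And>x. x \<in> set us \<Longrightarrow> x \<bullet> u = 0"
  shows "orthonormal n (us @ [u])"
  unfolding orthonormal_def
proof (intro conjI allI impI)
  show "set (us @ [u]) \<subseteq> carrier_vec n" using o u unfolding orthonormal_def by auto
  have "u \<bullet> x = 0" if "x \<in> set us" for x
    using orth[OF that] comm_scalar_prod[of u n x] u o that unfolding orthonormal_def by auto
  then show "(us @ [u]) ! i \<bullet> (us @ [u]) ! j = (if i = j then 1 else 0)"
    if "i < length (us @ [u])" "j < length (us @ [u])" for i j
    using o u orth that unfolding orthonormal_def
    by (cases "i < length us"; cases "j < length us") (auto simp: nth_append)
qed

lemma orthonormal_ConsI: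
  assumes x: "x \<in> carrier_vec n" "x \<bullet> x = 1" and orth: "\<And>y. y \<in> set ys \<Longrightarrow> x \<bullet> y = 0"
    and ys: "orthonormal n ys"
  shows "orthonormal n (x # ys)"
proof -
  have "y \<bullet> x = 0" if "y \<in> set ys" for y
    using orth[OF that] comm_scalar_prod[OF _ x(1), of y] ys that unfolding orthonormal_def by auto
  then show ?thesis
    using x orth ys unfolding orthonormal_def
    by (auto simp: nth_Cons split: nat.split)
qed

lemma orthonormal_mapI:
  assumes "distinct es" and "\<And>e. e \<in> set es \<Longrightarrow> f e \<in> carrier_vec n"
    and "\<And>e e'. e \<in> set es \<Longrightarrow> e' \<in> set es \<Longrightarrow> f e \<bullet> f e' = (if e = e' then 1 else 0)"
  shows "orthonormal n (map f es)"
  using assms unfolding orthonormal_def by (auto simp: nth_eq_iff_index_eq)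

lemma eigenpairs_mult:
  assumes M: "M \<in> carrier_mat n n" and us: "set us \<subseteq> carrier_vec n" and e: "eigenpairs M us ls"
  shows "M * mat_of_cols n us = mat_of_cols n us * mat_diag (length us) (\<lambda>i. ls!i)"
proof (rule eq_matI)
  fix i j assume "i < dim_row (mat_of_cols n us * mat_diag (length us) (\<lambda>i. ls!i))"
    and "j < dim_col (mat_of_cols n us * mat_diag (length us) (\<lambda>i. ls!i))"
  then have i: "i < n" and j: "j < length us" by (auto simp: mat_diag_def)
  have uj: "us!j \<in> carrier_vec n" using us j by auto
  have "(M * mat_of_cols n us) $$ (i, j) = (M *\<^sub>v us!j) $ i"
    using M i j uj by simp
  also have "\<dots> = ls!j * us!j $ i" using e i j uj unfolding eigenpairs_def by auto
  finally show "(M * mat_of_cols n us) $$ (i, j) = (mat_of_cols n us * mat_diag (length us) (\<lambda>i. ls!i)) $$ (i, j)"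
    using i j by (simp add: mat_diag_mult_right[of _ n] mat_of_cols_index)
qed (use M in \<open>auto simp: mat_diag_def\<close>)

lemma orthonormal_eigenpairs_projection:
  assumes M: "M \<in> carrier_mat n n" "transpose_mat M = M"
    and o: "orthonormal n us" and e: "eigenpairs M us ls"
  defines "U \<equiv> mat_of_cols n us"
  shows "M * (U * transpose_mat U) = (U * transpose_mat U) * M"
    and "(U * transpose_mat U) * (U * transpose_mat U) = U * transpose_mat U"
    and "transpose_mat (U * transpose_mat U) = U * transpose_mat U"
    and "mat_trace (U * transpose_mat U) = real (length us)"
proof -
  define D where "D = mat_diag (length us) (\<lambda>i. ls!i)"
  have U: "U \<in> carrier_mat n (length us)" and D: "D \<in> carrier_mat (length us) (length us)"
    unfolding U_def D_def by auto
  have UTU: "transpose_mat U * U = 1\<^sub>m (length us)" unfolding U_def by (rule orthonormal_gram[OF o])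
  have MU: "M * U = U * D"
    unfolding U_def D_def using eigenpairs_mult[OF M(1) _ e] o unfolding orthonormal_def by auto
  have "transpose_mat U * M = D * transpose_mat U"
  proof -
    have "transpose_mat U * M = transpose_mat (M * U)" using transpose_mult[OF M(1) U] M(2) by simp
    also have "\<dots> = transpose_mat D * transpose_mat U" unfolding MU by (rule transpose_mult[OF U D])
    also have "transpose_mat D = D" unfolding D_def by (intro eq_matI) (auto simp: mat_diag_def)
    finally show ?thesis .
  qed
  then have "(U * transpose_mat U) * M = (M * U) * transpose_mat U"
    unfolding MU using M U D by simp
  then show "M * (U * transpose_mat U) = (U * transpose_mat U) * M"
    using M U by simp
  have "U * transpose_mat U * (U * transpose_mat U) = U * ((transpose_mat U * U) * transpose_mat U)"
    using U by (simp add: assoc_mult_mat[of _ n _ _ _ _ n])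
  then show "(U * transpose_mat U) * (U * transpose_mat U) = U * transpose_mat U"
    using U unfolding UTU by simp
  show "transpose_mat (U * transpose_mat U) = U * transpose_mat U"
    using transpose_mult[OF U, of "transpose_mat U" n] U by simp
  have "mat_trace (U * transpose_mat U) = mat_trace (transpose_mat U * U)"
    using U by (intro mat_trace_mult_comm) auto
  then show "mat_trace (U * transpose_mat U) = real (length us)"
    unfolding UTU by (simp add: mat_trace_def)
qed

lemma eigenpairs_orthogonal_eigenvector:
  assumes M: "M \<in> carrier_mat n n" "transpose_mat M = M"
    and o: "orthonormal n us" and e: "eigenpairs M us ls" and lt: "length us < n"
  shows "\<exists>a v. v \<in> carrier_vec n \<and> v \<noteq> 0\<^sub>v n \<and> (\<forall>x\<in>set us. x \<bullet> v = 0) \<and> M *\<^sub>v v = a \<cdot>\<^sub>v v"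
proof -
  define U where "U = mat_of_cols n us"
  have U: "U \<in> carrier_mat n (length us)" unfolding U_def by simp
  note K = orthonormal_eigenpairs_projection[OF M o e, folded U_def]
  have KC: "U * transpose_mat U \<in> carrier_mat n n" using U by simp
  have "mat_trace (U * transpose_mat U) \<noteq> real n" using K(4) lt by simp
  then obtain a v where v: "v \<in> carrier_vec n" "v \<noteq> 0\<^sub>v n" and Kv: "(U * transpose_mat U) *\<^sub>v v = 0\<^sub>v n"
    and Mv: "M *\<^sub>v v = a \<cdot>\<^sub>v v"
    using commuting_projection_kernel_eigenvector[OF M KC K(3) K(2) K(1)] by blast
  have "transpose_mat U * (U * transpose_mat U) = (transpose_mat U * U) * transpose_mat U"
    using U by (intro assoc_mult_mat[symmetric]) auto
  then have "transpose_mat U * (U * transpose_mat U) = transpose_mat U"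
    using U unfolding orthonormal_gram[OF o, folded U_def] by simp
  then have "transpose_mat U *\<^sub>v v = transpose_mat U *\<^sub>v ((U * transpose_mat U) *\<^sub>v v)"
    using assoc_mult_mat_vec[of "transpose_mat U" "length us" n "U * transpose_mat U" n v] U KC v
    by simp
  then have UTv: "transpose_mat U *\<^sub>v v = 0\<^sub>v (length us)" using Kv U by (auto intro!: eq_vecI)
  have "x \<bullet> v = 0" if x: "x \<in> set us" for x
  proof -
    obtain i where i: "i < length us" "x = us!i" using x in_set_conv_nth[of x us] by blast
    have "us!i \<in> carrier_vec n" using o nth_mem[OF i(1)] unfolding orthonormal_def by auto
    then have "(transpose_mat U *\<^sub>v v) $ i = us!i \<bullet> v"
      unfolding U_def transpose_mat_of_cols using i mat_of_rows_row[OF i(1)] by simp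
    then show ?thesis using UTv i by simp
  qed
  then show ?thesis using v Mv by blast
qed

lemma orthonormal_eigenpairs_extend:
  assumes M: "M \<in> carrier_mat n n" "transpose_mat M = M"
    and o: "orthonormal n us" and e: "eigenpairs M us ls" and lt: "length us < n"
  shows "\<exists>u l. orthonormal n (us @ [u]) \<and> eigenpairs M (us @ [u]) (ls @ [l])"
proof -
  obtain a v where v: "v \<in> carrier_vec n" "v \<noteq> 0\<^sub>v n" and orth: "\<And>x. x \<in> set us \<Longrightarrow> x \<bullet> v = 0"
    and Mv: "M *\<^sub>v v = a \<cdot>\<^sub>v v"
    using eigenpairs_orthogonal_eigenvector[OF M o e lt] by blast
  define u where "u = (1 / sqrt (v \<bullet> v)) \<cdot>\<^sub>v v"
  have vv: "v \<bullet> v > 0" using conjugate_square_greater_0_vec[OF v(1)] v(2) by simp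
  have u: "u \<in> carrier_vec n" "u \<bullet> u = 1" unfolding u_def using v vv
    by (auto simp: real_sqrt_mult[symmetric])
  have "x \<bullet> u = 0" if "x \<in> set us" for x
    unfolding u_def using orth[OF that] o that v unfolding orthonormal_def by auto
  then have "orthonormal n (us @ [u])" using orthonormal_snoc[OF o u] by blast
  moreover have "M *\<^sub>v u = a \<cdot>\<^sub>v u"
    unfolding u_def using mult_mat_vec[OF M(1) v(1)] Mv v by (simp add: smult_smult_assoc mult.commute)
  then have "eigenpairs M (us @ [u]) (ls @ [a])"
    using e unfolding eigenpairs_def by (auto simp: nth_append)
  ultimately show ?thesis by blast
qed

theorem orthonormal_eigenbasis_exists:
  assumes M: "M \<in> carrier_mat n n" "transpose_mat M = M"
  shows "\<exists>us ls. orthonormal n us \<and> eigenpairs M us ls \<and> length us = n"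
proof -
  have "\<exists>us ls. orthonormal n us \<and> eigenpairs M us ls \<and> length us = k" if "k \<le> n" for k
    using that
  proof (induction k)
    case 0
    show ?case by (intro exI[of _ "[]"]) (auto simp: orthonormal_def eigenpairs_def)
  next
    case (Suc k)
    then obtain us ls where o: "orthonormal n us" and e: "eigenpairs M us ls" and "length us = k"
      by auto
    with Suc.prems obtain u l where "orthonormal n (us @ [u])" "eigenpairs M (us @ [u]) (ls @ [l])"
      using orthonormal_eigenpairs_extend[OF M o e] by auto
    then show ?case using \<open>length us = k\<close> by (intro exI) auto
  qed
  then show ?thesis by blast
qed

lemma orthonormal_basis_right_inverse:
  assumes o: "orthonormal n us" and l: "length us = n"
  shows "mat_of_cols n us * transpose_mat (mat_of_cols n us) = 1\<^sub>m n"
  using mat_mult_left_right_inverse[of "transpose_mat (mat_of_cols n us)" n "mat_of_cols n us"]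
    orthonormal_gram[OF o] l by auto

lemma mat_diag_quadratic_form:
  fixes y :: "real vec"
  assumes y: "y \<in> carrier_vec n"
  shows "y \<bullet> (mat_diag n f *\<^sub>v y) = (\<Sum>j<n. f j * (y $ j)\<^sup>2)"
proof -
  define z where "z = mat_diag n f *\<^sub>v y"
  have "z $ j = f j * y $ j" if "j < n" for j
  proof -
    have "z $ j = (\<Sum>k\<in>{0..<n}. (if j = k then f k else 0) * y $ k)"
      unfolding z_def using that y by (simp add: mat_diag_def scalar_prod_def)
    also have "\<dots> = (\<Sum>k\<in>{0..<n}. if j = k then f k * y $ k else 0)" by (rule sum.cong) auto
    finally show ?thesis using that by simp
  qed
  moreover have "dim_vec z = n" unfolding z_def by (simp add: mat_diag_def)
  ultimately show ?thesis
    unfolding z_def[symmetric] scalar_prod_def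
    by (auto simp: power2_eq_square lessThan_atLeast0 intro!: sum.cong)
qed

lemma orthonormal_basis_expansion:
  fixes M :: "real mat"
  assumes M: "M \<in> carrier_mat n n" and o: "orthonormal n us" and e: "eigenpairs M us ls"
    and l: "length us = n" and x: "x \<in> carrier_vec n"
  shows "x \<bullet> (M *\<^sub>v x) = (\<Sum>j<n. ls!j * (us!j \<bullet> x)\<^sup>2)"
    and "x \<bullet> x = (\<Sum>j<n. (us!j \<bullet> x)\<^sup>2)"
proof -
  define U where "U = mat_of_cols n us"
  define y where "y = transpose_mat U *\<^sub>v x"
  have U: "U \<in> carrier_mat n n" unfolding U_def using l by auto
  have y: "y \<in> carrier_vec n" unfolding y_def using U x by simp
  have yj: "y $ j = us!j \<bullet> x" if "j < n" for j
  proof -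
    have "us!j \<in> carrier_vec n" using o that l nth_mem[of j us] unfolding orthonormal_def by auto
    then show ?thesis unfolding y_def U_def transpose_mat_of_cols using that l mat_of_rows_row by simp
  qed
  have xy: "x = U *\<^sub>v y"
    using orthonormal_basis_right_inverse[OF o l, folded U_def] U x unfolding y_def
    by (metis assoc_mult_mat_vec one_mult_mat_vec transpose_carrier_mat)
  have adj: "x \<bullet> (U *\<^sub>v w) = y \<bullet> w" if "w \<in> carrier_vec n" for w
    using transpose_vec_mult_scalar[OF U that x] unfolding y_def by simp
  have "M *\<^sub>v x = U *\<^sub>v (mat_diag n (\<lambda>i. ls!i) *\<^sub>v y)"
    using eigenpairs_mult[OF M _ e, folded U_def] o l U y M xy unfolding orthonormal_def
    by (metis assoc_mult_mat_vec mat_diag_dim)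
  then have "x \<bullet> (M *\<^sub>v x) = y \<bullet> (mat_diag n (\<lambda>i. ls!i) *\<^sub>v y)"
    using adj[OF mult_mat_vec_carrier[OF mat_diag_dim y]] by simp
  also have "\<dots> = (\<Sum>j<n. ls!j * (y $ j)\<^sup>2)" by (rule mat_diag_quadratic_form[OF y])
  finally show "x \<bullet> (M *\<^sub>v x) = (\<Sum>j<n. ls!j * (us!j \<bullet> x)\<^sup>2)" by (simp add: yj)
  have "x \<bullet> x = y \<bullet> y" using adj[OF y] xy by simp
  also have "\<dots> = (\<Sum>j<n. (y $ j)\<^sup>2)"
    using y by (simp add: scalar_prod_def power2_eq_square lessThan_atLeast0)
  finally show "x \<bullet> x = (\<Sum>j<n. (us!j \<bullet> x)\<^sup>2)" by (simp add: yj)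
qed

section \<open>Ky Fan's inequality\<close>

lemma eigenbasis_char_poly:
  fixes M :: "real mat"
  assumes M: "M \<in> carrier_mat n n" and o: "orthonormal n us" and e: "eigenpairs M us ls"
    and l: "length us = n"
  shows "char_poly M = (\<Prod>a\<leftarrow>ls. [:-a, 1:])"
proof -
  define U where "U = mat_of_cols n us"
  define D where "D = mat_diag n (\<lambda>i. ls!i)"
  have U: "U \<in> carrier_mat n n" and D: "D \<in> carrier_mat n n" unfolding U_def D_def using l by auto
  have UUT: "U * transpose_mat U = 1\<^sub>m n" unfolding U_def by (rule orthonormal_basis_right_inverse[OF o l])
  have UTU: "transpose_mat U * U = 1\<^sub>m n" unfolding U_def using orthonormal_gram[OF o] l by simp
  have MU: "M * U = U * D"
    unfolding U_def D_def using eigenpairs_mult[OF M _ e] o l unfolding orthonormal_def by auto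
  have "M = (M * U) * transpose_mat U" using M U UUT by (simp flip: assoc_mult_mat[of M n n U n])
  then have "similar_mat_wit M D U (transpose_mat U)"
    unfolding similar_mat_wit_def MU using M D U UUT UTU by auto
  then have "char_poly M = char_poly D" by (intro char_poly_similar) (auto simp: similar_mat_def)
  also have "\<dots> = (\<Prod>a\<leftarrow>diag_mat D. [:-a, 1:])"
    by (rule char_poly_upper_triangular[OF D]) (auto simp: upper_triangular_def D_def mat_diag_def)
  also have "diag_mat D = ls"
    using e l unfolding diag_mat_def D_def eigenpairs_def by (intro nth_equalityI) (auto simp: mat_diag_def)
  finally show ?thesis .
qed

lemma proots_linear_factors: "proots (\<Prod>a\<leftarrow>ls. [:-a, 1:]) = mset (ls :: 'a::idom list)"
proof (induct ls)
  case (Cons a ls)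
  have "(\<Prod>a\<leftarrow>ls. [:-a, 1:]) \<noteq> 0" by (auto simp: prod_list_zero_iff)
  then have "proots ([:-a, 1:] * (\<Prod>a\<leftarrow>ls. [:-a, 1:])) = proots [:-a, 1:] + proots (\<Prod>a\<leftarrow>ls. [:-a, 1:])"
    by (intro proots_mult) auto
  then show ?case using Cons by simp
qed simp

lemma eigenvalues_desc_eigenbasis:
  assumes M: "M \<in> carrier_mat n n" "transpose_mat M = M"
  obtains us where "orthonormal n us" "length us = n" "eigenpairs M us (eigenvalues_desc M)"
proof -
  obtain vs ls where o: "orthonormal n vs" and e: "eigenpairs M vs ls" and l: "length vs = n"
    using orthonormal_eigenbasis_exists[OF M] by blast
  have "mset (eigenvalues_desc M) = mset ls"
    unfolding eigenvalues_desc_def eigenbasis_char_poly[OF M(1) o e l] proots_linear_factors by simp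
  then obtain p where p: "p permutes {..<length ls}" "permute_list p ls = eigenvalues_desc M"
    using mset_eq_permutation by metis
  have ll: "length ls = n" using e l unfolding eigenpairs_def by simp
  then have p': "p permutes {..<length vs}" using p(1) l by simp
  have pi: "p i < n" if "i < n" for i using permutes_in_image[OF p'] that l by simp
  have pinj: "p i = p j \<longleftrightarrow> i = j" for i j using permutes_inj[OF p'] by (auto dest: injD)
  show thesis
  proof
    show "orthonormal n (permute_list p vs)"
      using o pi l unfolding orthonormal_def by (auto simp: permute_list_nth[OF p'] pinj set_permute_list[OF p'])
    show "length (permute_list p vs) = n" using l by simp
    show "eigenpairs M (permute_list p vs) (eigenvalues_desc M)"
      using e pi l ll unfolding eigenpairs_def p(2)[symmetric]
      by (auto simp: permute_list_nth[OF p'] permute_list_nth[OF p(1)])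
  qed
qed

lemma eigenvalues_desc_antimono:
  assumes "i \<le> j" and "j < length (eigenvalues_desc M)"
  shows "eigenvalues_desc M ! j \<le> eigenvalues_desc M ! i"
  using assms unfolding eigenvalues_desc_def
  by (auto simp: rev_nth intro!: sorted_nth_mono)

lemma bessel_inequality:
  assumes o: "orthonormal n xs" and u: "u \<in> carrier_vec n"
  shows "(\<Sum>i<length xs. (u \<bullet> xs!i)\<^sup>2) \<le> u \<bullet> u"
proof -
  define X where "X = mat_of_cols n xs"
  define c where "c = transpose_mat X *\<^sub>v u"
  \<comment> \<open>z is the orthogonal projection of u onto the span of xs\<close>
  define z where "z = X *\<^sub>v c"
  have X: "X \<in> carrier_mat n (length xs)" unfolding X_def by simp
  have c: "c \<in> carrier_vec (length xs)" unfolding c_def using X u by simp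
  have z: "z \<in> carrier_vec n" unfolding z_def using X c by simp
  have uz: "u \<bullet> z = c \<bullet> c" unfolding z_def c_def using transpose_vec_mult_scalar[OF X _ u] c c_def by simp
  have "z \<bullet> z = (transpose_mat X *\<^sub>v z) \<bullet> c" using transpose_vec_mult_scalar[OF X c z] z_def by simp
  also have "transpose_mat X *\<^sub>v z = c"
    unfolding z_def using orthonormal_gram[OF o, folded X_def] X c
    by (metis assoc_mult_mat_vec one_mult_mat_vec transpose_carrier_mat)
  finally have zz: "z \<bullet> z = c \<bullet> c" .
  have "0 \<le> (u - z) \<bullet> (u - z)" using conjugate_square_ge_0_vec[of "u - z"] by simp
  also have "\<dots> = u \<bullet> u - c \<bullet> c"
    using u z uz zz comm_scalar_prod[OF u z] by (simp add: minus_scalar_prod_distrib scalar_prod_minus_distrib)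
  finally have "c \<bullet> c \<le> u \<bullet> u" by simp
  moreover have "c $ i = u \<bullet> xs!i" if "i < length xs" for i
  proof -
    have "xs!i \<in> carrier_vec n" using o that nth_mem unfolding orthonormal_def by auto
    then show ?thesis unfolding c_def X_def transpose_mat_of_cols
      using that comm_scalar_prod[OF _ u] by simp
  qed
  ultimately show ?thesis using c by (simp add: scalar_prod_def power2_eq_square lessThan_atLeast0)
qed

lemma weighted_sum_le_prefix_sum:
  fixes L w :: "nat \<Rightarrow> real"
  assumes antimono: "\<And>i j. i \<le> j \<Longrightarrow> j < n \<Longrightarrow> L j \<le> L i"
    and w: "\<And>j. j < n \<Longrightarrow> 0 \<le> w j \<and> w j \<le> 1"
    and sum_w: "(\<Sum>j<n. w j) = real k" and kn: "k \<le> n"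
  shows "(\<Sum>j<n. L j * w j) \<le> (\<Sum>j<k. L j)"
proof (cases "n = 0")
  case True
  then show ?thesis using kn by simp
next
  case False
  \<comment> \<open>after subtracting the threshold t, head terms are nonnegative and tail terms nonpositive\<close>
  define t where "t = L (min k (n - 1))"
  have head: "(\<Sum>j<k. (L j - t) * w j) \<le> (\<Sum>j<k. L j - t)"
  proof (rule sum_mono)
    fix j assume "j \<in> {..<k}"
    then have "L j - t \<ge> 0" "w j \<le> 1" unfolding t_def using antimono[of j "min k (n - 1)"] w[of j] kn False by auto
    then show "(L j - t) * w j \<le> L j - t" by (simp add: mult_left_le)
  qed
  have tail: "(\<Sum>j\<in>{k..<n}. (L j - t) * w j) \<le> 0"
  proof (rule sum_nonpos)
    fix j assume "j \<in> {k..<n}"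
    then have "L j - t \<le> 0" "0 \<le> w j" unfolding t_def using antimono[of "min k (n - 1)" j] w[of j] False by auto
    then show "(L j - t) * w j \<le> 0" by (simp add: mult_nonpos_nonneg)
  qed
  have "(\<Sum>j<n. L j * w j) = (\<Sum>j<n. (L j - t) * w j) + t * real k"
    using sum_w by (simp add: algebra_simps sum.distrib sum_distrib_left[symmetric] sum_subtractf)
  also have "\<dots> = (\<Sum>j<k. (L j - t) * w j) + (\<Sum>j\<in>{k..<n}. (L j - t) * w j) + t * real k"
    using sum.atLeastLessThan_concat[of 0 k n "\<lambda>j. (L j - t) * w j"] kn
    by (simp add: lessThan_atLeast0)
  also have "\<dots> \<le> (\<Sum>j<k. L j - t) + t * real k" using head tail by linarith
  also have "\<dots> = (\<Sum>j<k. L j)" by (simp add: sum_subtractf)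
  finally show ?thesis .
qed

theorem ky_fan:
  assumes M: "M \<in> carrier_mat n n" "transpose_mat M = M" and o: "orthonormal n xs"
  shows "(\<Sum>x\<leftarrow>xs. x \<bullet> (M *\<^sub>v x)) \<le> S_k (length xs) M"
proof -
  define L where "L = eigenvalues_desc M"
  define k where "k = length xs"
  obtain us where ou: "orthonormal n us" and l: "length us = n" and e: "eigenpairs M us L"
    using eigenvalues_desc_eigenbasis[OF M] unfolding L_def by metis
  have lL: "length L = n" using e l unfolding eigenpairs_def by simp
  have xs: "xs!i \<in> carrier_vec n" "xs!i \<bullet> xs!i = 1" if "i < k" for i
    using o that nth_mem unfolding orthonormal_def k_def by auto
  have us: "us!j \<in> carrier_vec n" "us!j \<bullet> us!j = 1" if "j < n" for j
    using ou that l nth_mem unfolding orthonormal_def by auto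
  define w where "w j = (\<Sum>i<k. (us!j \<bullet> xs!i)\<^sup>2)" for j
  note expansion = orthonormal_basis_expansion[OF M(1) ou e l]
  have w: "0 \<le> w j \<and> w j \<le> 1" if "j < n" for j
    using bessel_inequality[OF o us(1)[OF that]] us(2)[OF that] unfolding w_def k_def
    by (auto intro: sum_nonneg)
  have "(\<Sum>j<n. w j) = (\<Sum>i<k. \<Sum>j<n. (us!j \<bullet> xs!i)\<^sup>2)" unfolding w_def by (rule sum.swap)
  also have "\<dots> = real k" using expansion(2)[OF xs(1)] xs(2) by simp
  finally have sum_w: "(\<Sum>j<n. w j) = real k" .
  have "(\<Sum>j<n. w j) \<le> real n" using w sum_mono[of "{..<n}" w "\<lambda>_. 1"] by simp
  then have kn: "k \<le> n" using sum_w by simp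
  have "(\<Sum>x\<leftarrow>xs. x \<bullet> (M *\<^sub>v x)) = (\<Sum>i<k. \<Sum>j<n. L!j * (us!j \<bullet> xs!i)\<^sup>2)"
    unfolding k_def sum_list_sum_nth atLeast0LessThan using expansion(1)[OF xs(1)] k_def by simp
  also have "\<dots> = (\<Sum>j<n. L!j * w j)"
    unfolding w_def sum_distrib_left by (rule sum.swap)
  also have "\<dots> \<le> (\<Sum>j<k. L!j)"
  proof (rule weighted_sum_le_prefix_sum)
    show "L!j \<le> L!i" if "i \<le> j" "j < n" for i j
      using eigenvalues_desc_antimono[of i j M] that lL unfolding L_def by simp
  qed (use w sum_w kn in auto)
  also have "\<dots> = S_k k M"
    unfolding S_k_def L_def[symmetric] sum_list_sum_nth atLeast0LessThan using kn lL by (simp add: min_def)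
  finally show ?thesis unfolding k_def .
qed

section \<open>The quadratic form of A_alpha\<close>

lemma simple_graph_finite: "simple_graph n E \<Longrightarrow> finite E"
  unfolding simple_graph_def
  by (rule finite_subset[of _ "Pow {..<n}"]) auto

lemma simple_graph_edge_subset: "simple_graph n E \<Longrightarrow> e \<in> E \<Longrightarrow> e \<subseteq> {..<n}"
  unfolding simple_graph_def by auto

lemma A_alpha_carrier: "A_alpha \<alpha> n E \<in> carrier_mat n n"
  unfolding A_alpha_def deg_matrix_def adj_matrix_def by simp

lemma A_alpha_symmetric: "transpose_mat (A_alpha \<alpha> n E) = A_alpha \<alpha> n E"
  by (rule eq_matI) (auto simp: A_alpha_def deg_matrix_def adj_matrix_def insert_commute)

lemma degree_weighted_sum:
  fixes f :: "nat \<Rightarrow> real"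
  assumes "simple_graph n E"
  shows "(\<Sum>i<n. real (degree E i) * f i) = (\<Sum>e\<in>E. \<Sum>v\<in>e. f v)"
proof -
  have "(\<Sum>i<n. real (degree E i) * f i) = (\<Sum>i<n. \<Sum>e\<in>E. if i \<in> e then f i else 0)"
    using simple_graph_finite[OF assms]
    by (simp add: degree_def sum.If_cases Int_def conj_commute)
  also have "\<dots> = (\<Sum>e\<in>E. \<Sum>i<n. if i \<in> e then f i else 0)" by (rule sum.swap)
  also have "\<dots> = (\<Sum>e\<in>E. \<Sum>v\<in>e. f v)"
  proof (rule sum.cong)
    fix e assume "e \<in> E"
    then have "{..<n} \<inter> e = e" using simple_graph_edge_subset[OF assms] by auto
    then show "(\<Sum>i<n. if i \<in> e then f i else 0) = (\<Sum>v\<in>e. f v)"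
      by (simp add: sum.inter_restrict[symmetric])
  qed simp
  finally show ?thesis .
qed

lemma sum_pairs_doubleton:
  fixes f :: "nat \<Rightarrow> real"
  assumes "u \<noteq> w" "u < n" "w < n"
  shows "(\<Sum>i<n. \<Sum>j<n. if {i, j} = {u, w} then f i * f j else 0) = 2 * f u * f w"
proof -
  have "(if {i, j} = {u, w} then f i * f j else 0)
      = (if j = w then if i = u then f u * f w else 0 else 0) + (if j = u then if i = w then f u * f w else 0 else 0)"
    for i j using assms(1) by (auto simp: doubleton_eq_iff)
  then show ?thesis using assms by (simp add: sum.distrib)
qed

lemma adjacency_weighted_sum:
  fixes f :: "nat \<Rightarrow> real"
  assumes sg: "simple_graph n E"
  shows "(\<Sum>i<n. \<Sum>j<n. if {i, j} \<in> E then f i * f j else 0)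
    = (\<Sum>e\<in>E. (\<Sum>v\<in>e. f v)\<^sup>2 - (\<Sum>v\<in>e. (f v)\<^sup>2))"
proof -
  have fin: "finite E" using simple_graph_finite[OF sg] .
  have "(\<Sum>i<n. \<Sum>j<n. if {i, j} \<in> E then f i * f j else 0)
      = (\<Sum>i<n. \<Sum>j<n. \<Sum>e\<in>E. if {i, j} = e then f i * f j else 0)"
    using fin by (simp add: sum.delta)
  also have "\<dots> = (\<Sum>i<n. \<Sum>e\<in>E. \<Sum>j<n. if {i, j} = e then f i * f j else 0)"
    by (rule sum.cong[OF refl], rule sum.swap)
  also have "\<dots> = (\<Sum>e\<in>E. \<Sum>i<n. \<Sum>j<n. if {i, j} = e then f i * f j else 0)"
    by (rule sum.swap)
  also have "\<dots> = (\<Sum>e\<in>E. (\<Sum>v\<in>e. f v)\<^sup>2 - (\<Sum>v\<in>e. (f v)\<^sup>2))"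
  proof (rule sum.cong)
    fix e assume "e \<in> E"
    then obtain u w where e: "e = {u, w}" "u \<noteq> w" "u < n" "w < n" using sg unfolding simple_graph_def by blast
    then show "(\<Sum>i<n. \<Sum>j<n. if {i, j} = e then f i * f j else 0) = (\<Sum>v\<in>e. f v)\<^sup>2 - (\<Sum>v\<in>e. (f v)\<^sup>2)"
      using sum_pairs_doubleton[OF e(2-4), of f] by (simp add: power2_eq_square algebra_simps)
  qed simp
  finally show ?thesis .
qed

lemma A_alpha_quadratic_form:
  assumes sg: "simple_graph n E"
  shows "vec n g \<bullet> (A_alpha \<alpha> n E *\<^sub>v vec n g)
    = (\<Sum>e\<in>E. \<alpha> * (\<Sum>v\<in>e. (g v)\<^sup>2) + (1 - \<alpha>) * ((\<Sum>v\<in>e. g v)\<^sup>2 - (\<Sum>v\<in>e. (g v)\<^sup>2)))"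
proof -
  have row: "(A_alpha \<alpha> n E *\<^sub>v vec n g) $ i
      = \<alpha> * real (degree E i) * g i + (1 - \<alpha>) * (\<Sum>j<n. if {i, j} \<in> E then g j else 0)" if "i < n" for i
  proof -
    have "(A_alpha \<alpha> n E *\<^sub>v vec n g) $ i = (\<Sum>j<n. \<alpha> * (if i = j then real (degree E i) * g j else 0)
        + (1 - \<alpha>) * (if {i, j} \<in> E then g j else 0))"
      using that unfolding A_alpha_def deg_matrix_def adj_matrix_def
      by (auto simp: scalar_prod_def lessThan_atLeast0 algebra_simps intro!: sum.cong)
    then show ?thesis using that by (simp add: sum.distrib sum_distrib_left[symmetric])
  qed
  have "vec n g \<bullet> (A_alpha \<alpha> n E *\<^sub>v vec n g) = (\<Sum>i<n. g i * (A_alpha \<alpha> n E *\<^sub>v vec n g) $ i)"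
    unfolding scalar_prod_def using A_alpha_carrier[of \<alpha> n E]
    by (intro sum.cong) (auto simp del: index_mult_mat_vec simp: lessThan_atLeast0)
  also have "\<dots> = (\<Sum>i<n. \<alpha> * (real (degree E i) * (g i)\<^sup>2)
      + (1 - \<alpha>) * (\<Sum>j<n. if {i, j} \<in> E then g i * g j else 0))"
    by (intro sum.cong) (auto simp: row sum_distrib_left power2_eq_square algebra_simps intro!: sum.cong)
  also have "\<dots> = \<alpha> * (\<Sum>i<n. real (degree E i) * (g i)\<^sup>2)
      + (1 - \<alpha>) * (\<Sum>i<n. \<Sum>j<n. if {i, j} \<in> E then g i * g j else 0)"
    by (simp add: sum.distrib sum_distrib_left)
  also have "\<dots> = (\<Sum>e\<in>E. \<alpha> * (\<Sum>v\<in>e. (g v)\<^sup>2) + (1 - \<alpha>) * ((\<Sum>v\<in>e. g v)\<^sup>2 - (\<Sum>v\<in>e. (g v)\<^sup>2)))"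
    unfolding degree_weighted_sum[OF sg] adjacency_weighted_sum[OF sg]
    by (simp add: sum.distrib sum_distrib_left)
  finally show ?thesis .
qed

section \<open>Test vectors of a bipartite graph\<close>

lemma bipartite_edgeE:
  assumes sg: "simple_graph n E" and bp: "bipartition n E X Y" and e: "e \<in> E"
  obtains u w where "e = {u, w}" "u \<in> X" "w \<in> Y" "u \<notin> Y" "w \<notin> X" "u \<noteq> w"
proof -
  obtain u w where uw: "e = {u, w}" "u \<noteq> w" "u < n" "w < n" using sg e unfolding simple_graph_def by blast
  have X: "card (e \<inter> X) = 1" and Y: "card (e \<inter> Y) = 1" and XY: "X \<union> Y = {0..<n}" "X \<inter> Y = {}"
    using bp e unfolding bipartition_def by auto
  have "\<not> (u \<in> X \<and> w \<in> X)" using X uw by (auto simp: Int_absorb2)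
  moreover have "\<not> (u \<in> Y \<and> w \<in> Y)" using Y uw by (auto simp: Int_absorb2)
  ultimately have "(u \<in> X \<and> w \<in> Y) \<or> (w \<in> X \<and> u \<in> Y)" using XY uw by auto
  then show thesis
  proof
    assume "u \<in> X \<and> w \<in> Y"
    then show thesis using that[of u w] XY(2) uw by auto
  next
    assume "w \<in> X \<and> u \<in> Y"
    then show thesis using that[of w u] XY(2) uw by (auto simp: insert_commute)
  qed
qed

lemma matching_of_card:
  assumes "finite E" and "k \<le> matching_number E"
  obtains M where "is_matching E M" "card M = k"
proof -
  have fin: "finite {M. is_matching E M}"
    by (rule finite_subset[of _ "Pow E"]) (use assms(1) in \<open>auto simp: is_matching_def\<close>)
  have "is_matching E {}" unfolding is_matching_def by simp
  then have "matching_number E \<in> card ` {M. is_matching E M}"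
    unfolding matching_number_def using fin by (intro Max_in) auto
  then obtain Mx where Mx: "is_matching E Mx" "card Mx = matching_number E" by auto
  then obtain M where "M \<subseteq> Mx" "card M = k" using assms(2) by (metis obtain_subset_with_card_n)
  moreover have "is_matching E M" using Mx(1) \<open>M \<subseteq> Mx\<close> unfolding is_matching_def by blast
  ultimately show thesis using that by blast
qed

lemma matching_number_empty: "matching_number {} = 0"
proof -
  have "{M. is_matching {} M} = {{}}" unfolding is_matching_def by auto
  then show ?thesis unfolding matching_number_def by simp
qed

definition side_vector :: "nat \<Rightarrow> nat set \<Rightarrow> real \<Rightarrow> real \<Rightarrow> real vec" where
  "side_vector n X a b = vec n (\<lambda>v. if v \<in> X then a else b)"

definition edge_vector :: "nat \<Rightarrow> nat set \<Rightarrow> real \<Rightarrow> real \<Rightarrow> nat set \<Rightarrow> real vec" where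
  "edge_vector n X c d e = vec n (\<lambda>v. if v \<in> e then if v \<in> X then c else - d else 0)"

lemma vec_scalar_prod_supported:
  assumes "e \<subseteq> {..<n}" and "\<And>v. v < n \<Longrightarrow> v \<notin> e \<Longrightarrow> f v * g v = 0"
  shows "vec n f \<bullet> vec n g = (\<Sum>v\<in>e. f v * (g v :: real))"
proof -
  have "vec n f \<bullet> vec n g = (\<Sum>v<n. f v * g v)" by (simp add: scalar_prod_def lessThan_atLeast0)
  also have "\<dots> = (\<Sum>v\<in>e. f v * g v)" using assms by (intro sum.mono_neutral_right) auto
  finally show ?thesis .
qed

lemma edge_vectors_orthogonal:
  assumes "e \<inter> f = {}"
  shows "edge_vector n X c d e \<bullet> edge_vector n X c d f = 0"
  using assms unfolding edge_vector_def by (auto simp: scalar_prod_def intro!: sum.neutral)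

lemma bipartite_weights:
  fixes s t :: real
  assumes s: "0 < s" and t: "0 < t"
  defines "a \<equiv> sqrt (1 / (2 * s))" and "b \<equiv> sqrt (1 / (2 * t))"
    and "c \<equiv> sqrt (s / (s + t))" and "d \<equiv> sqrt (t / (s + t))"
  shows "s * a\<^sup>2 + t * b\<^sup>2 = 1" and "c\<^sup>2 + d\<^sup>2 = 1" and "a * c = b * d"
    and "a\<^sup>2 + b\<^sup>2 = (1 / s + 1 / t) / 2" and "2 * (a * b) = 1 / sqrt (s * t)"
    and "c * d = sqrt (s * t) / (s + t)"
proof -
  show "s * a\<^sup>2 + t * b\<^sup>2 = 1" "a\<^sup>2 + b\<^sup>2 = (1 / s + 1 / t) / 2"
    unfolding a_def b_def using s t by simp_all
  show "c\<^sup>2 + d\<^sup>2 = 1" unfolding c_def d_def using s t by (simp add: add_divide_distrib[symmetric])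
  have "a * c = sqrt (1 / (2 * (s + t)))" unfolding a_def c_def real_sqrt_mult[symmetric] using s by simp
  moreover have "b * d = sqrt (1 / (2 * (s + t)))" unfolding b_def d_def real_sqrt_mult[symmetric] using t by simp
  ultimately show "a * c = b * d" by simp
  have "a * b = sqrt ((1 / 2)\<^sup>2 / (s * t))"
    unfolding a_def b_def real_sqrt_mult[symmetric] by (simp add: power2_eq_square)
  then show "2 * (a * b) = 1 / sqrt (s * t)" by (simp add: real_sqrt_divide)
  have "c * d = sqrt (s * t / (s + t)\<^sup>2)"
    unfolding c_def d_def real_sqrt_mult[symmetric] by (simp add: power2_eq_square)
  then show "c * d = sqrt (s * t) / (s + t)" using s t by (simp add: real_sqrt_divide)
qed

context
  fixes n E X Y
  assumes sg: "simple_graph n E" and bp: "bipartition n E X Y"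
begin

lemma side_vector_norm:
  "side_vector n X a b \<bullet> side_vector n X a b = real (card X) * a\<^sup>2 + real (card Y) * b\<^sup>2"
proof -
  have XY: "{..<n} = X \<union> Y" "X \<inter> Y = {}" "finite X" "finite Y"
    using bp unfolding bipartition_def by (auto simp: lessThan_atLeast0 intro: finite_subset)
  have "side_vector n X a b \<bullet> side_vector n X a b = (\<Sum>v\<in>X \<union> Y. (if v \<in> X then a else b)\<^sup>2)"
    unfolding side_vector_def XY(1)[symmetric] by (simp add: scalar_prod_def lessThan_atLeast0 power2_eq_square)
  also have "\<dots> = (\<Sum>v\<in>X. (if v \<in> X then a else b)\<^sup>2) + (\<Sum>v\<in>Y. (if v \<in> X then a else b)\<^sup>2)"
    using XY by (simp add: sum.union_disjoint)
  also have "(\<Sum>v\<in>Y. (if v \<in> X then a else b)\<^sup>2) = (\<Sum>v\<in>Y. b\<^sup>2)"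
    using XY(2) by (intro sum.cong) auto
  finally show ?thesis by simp
qed

lemma side_edge_vector_inner:
  assumes "e \<in> E"
  shows "side_vector n X a b \<bullet> edge_vector n X c d e = a * c - b * d"
proof -
  obtain u w where e: "e = {u, w}" "u \<in> X" "w \<in> Y" "u \<notin> Y" "w \<notin> X" "u \<noteq> w"
    using bipartite_edgeE[OF sg bp assms] .
  have "side_vector n X a b \<bullet> edge_vector n X c d e
      = (\<Sum>v\<in>e. (if v \<in> X then a else b) * (if v \<in> e then if v \<in> X then c else - d else 0))"
    unfolding side_vector_def edge_vector_def
    by (rule vec_scalar_prod_supported) (use simple_graph_edge_subset[OF sg assms] in auto)
  then show ?thesis using e by auto
qed

lemma edge_vector_norm:
  assumes "e \<in> E"
  shows "edge_vector n X c d e \<bullet> edge_vector n X c d e = c\<^sup>2 + d\<^sup>2"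
proof -
  obtain u w where e: "e = {u, w}" "u \<in> X" "w \<in> Y" "u \<notin> Y" "w \<notin> X" "u \<noteq> w"
    using bipartite_edgeE[OF sg bp assms] .
  have "edge_vector n X c d e \<bullet> edge_vector n X c d e
      = (\<Sum>v\<in>e. (if v \<in> e then if v \<in> X then c else - d else 0)\<^sup>2)"
    unfolding edge_vector_def power2_eq_square
    by (rule vec_scalar_prod_supported) (use simple_graph_edge_subset[OF sg assms] in auto)
  then show ?thesis using e by auto
qed

lemma side_vector_form:
  "side_vector n X a b \<bullet> (A_alpha \<alpha> n E *\<^sub>v side_vector n X a b)
    = \<alpha> * real (card E) * (a\<^sup>2 + b\<^sup>2) + (1 - \<alpha>) * real (card E) * (2 * (a * b))"
proof -
  let ?g = "\<lambda>v. if v \<in> X then a else b"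
  have "\<alpha> * (\<Sum>v\<in>e. (?g v)\<^sup>2) + (1 - \<alpha>) * ((\<Sum>v\<in>e. ?g v)\<^sup>2 - (\<Sum>v\<in>e. (?g v)\<^sup>2))
      = \<alpha> * (a\<^sup>2 + b\<^sup>2) + (1 - \<alpha>) * (2 * (a * b))" if e: "e \<in> E" for e
  proof -
    obtain u w where e: "e = {u, w}" "u \<in> X" "w \<in> Y" "u \<notin> Y" "w \<notin> X" "u \<noteq> w"
      using bipartite_edgeE[OF sg bp e] .
    then show ?thesis by (auto simp: power2_eq_square algebra_simps)
  qed
  then have "side_vector n X a b \<bullet> (A_alpha \<alpha> n E *\<^sub>v side_vector n X a b)
      = (\<Sum>e\<in>E. \<alpha> * (a\<^sup>2 + b\<^sup>2) + (1 - \<alpha>) * (2 * (a * b)))"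
    unfolding side_vector_def A_alpha_quadratic_form[OF sg] by (intro sum.cong) auto
  then show ?thesis by (simp add: algebra_simps)
qed

lemma edge_vector_form:
  assumes "0 \<le> \<alpha>" and "e \<in> E"
  shows "\<alpha> * (c\<^sup>2 + d\<^sup>2) - 2 * (1 - \<alpha>) * (c * d)
    \<le> edge_vector n X c d e \<bullet> (A_alpha \<alpha> n E *\<^sub>v edge_vector n X c d e)"
proof -
  let ?g = "\<lambda>v. if v \<in> e then if v \<in> X then c else - d else 0"
  define q where "q f = \<alpha> * (\<Sum>v\<in>f. (?g v)\<^sup>2) + (1 - \<alpha>) * ((\<Sum>v\<in>f. ?g v)\<^sup>2 - (\<Sum>v\<in>f. (?g v)\<^sup>2))"
    for f
  obtain u w where e: "e = {u, w}" "u \<in> X" "w \<in> Y" "u \<notin> Y" "w \<notin> X" "u \<noteq> w"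
    using bipartite_edgeE[OF sg bp assms(2)] .
  have "q e = \<alpha> * (c\<^sup>2 + d\<^sup>2) - 2 * (1 - \<alpha>) * (c * d)"
    unfolding q_def using e by (auto simp: power2_eq_square algebra_simps)
  moreover have "0 \<le> q f" if f: "f \<in> E - {e}" for f
  proof -
    obtain p r where f': "f = {p, r}" "p \<noteq> r" using sg f unfolding simple_graph_def by blast
    \<comment> \<open>a second edge shares at most one vertex with e, so only the degree part of q f survives\<close>
    have "?g p * ?g r = 0" using f f' e by auto
    then have "q f = \<alpha> * ((?g p)\<^sup>2 + (?g r)\<^sup>2)" unfolding q_def f'(1) using f'(2)
      by (simp add: power2_eq_square algebra_simps)
    then show ?thesis using assms(1) by simp
  qed
  then have "q e \<le> sum q E"
    using simple_graph_finite[OF sg] assms(2) by (intro member_le_sum) auto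
  ultimately show ?thesis unfolding edge_vector_def A_alpha_quadratic_form[OF sg] q_def by simp
qed

lemma S_k_A_alpha_ge_test_vectors:
  assumes \<alpha>: "0 \<le> \<alpha>" and k: "k \<le> matching_number E"
    and ab: "real (card X) * a\<^sup>2 + real (card Y) * b\<^sup>2 = 1" and cd: "c\<^sup>2 + d\<^sup>2 = 1"
    and orth: "a * c = b * d"
  shows "\<alpha> * real (card E) * (a\<^sup>2 + b\<^sup>2) + (1 - \<alpha>) * real (card E) * (2 * (a * b))
      + real k * (\<alpha> - 2 * (1 - \<alpha>) * (c * d))
    \<le> S_k (Suc k) (A_alpha \<alpha> n E)"
proof -
  let ?x = "side_vector n X a b" and ?y = "edge_vector n X c d"
  let ?q = "\<lambda>v. v \<bullet> (A_alpha \<alpha> n E *\<^sub>v v)"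
  obtain M where M: "is_matching E M" "card M = k"
    using matching_of_card[OF simple_graph_finite[OF sg] k] .
  have ME: "M \<subseteq> E" and disj: "\<And>e f. e \<in> M \<Longrightarrow> f \<in> M \<Longrightarrow> e \<noteq> f \<Longrightarrow> e \<inter> f = {}"
    using M(1) unfolding is_matching_def by auto
  obtain es where es: "set es = M" "distinct es"
    using finite_distinct_list finite_subset[OF ME simple_graph_finite[OF sg]] by metis
  have "orthonormal n (?x # map ?y es)"
  proof (rule orthonormal_ConsI)
    show "?x \<in> carrier_vec n" "?x \<bullet> ?x = 1" using ab side_vector_norm by (auto simp: side_vector_def)
    show "?x \<bullet> y = 0" if "y \<in> set (map ?y es)" for y
      using that es ME side_edge_vector_inner orth by auto
    show "orthonormal n (map ?y es)"
      using es ME cd edge_vector_norm edge_vectors_orthogonal disj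
      by (intro orthonormal_mapI) (auto simp: edge_vector_def)
  qed
  from ky_fan[OF A_alpha_carrier A_alpha_symmetric this]
  have "?q ?x + (\<Sum>e\<in>M. ?q (?y e)) \<le> S_k (Suc k) (A_alpha \<alpha> n E)"
    using es M(2) distinct_card[OF es(2)] by (simp add: sum_list_distinct_conv_sum_set)
  moreover have "real k * (\<alpha> - 2 * (1 - \<alpha>) * (c * d)) \<le> (\<Sum>e\<in>M. ?q (?y e))"
  proof -
    have "\<alpha> - 2 * (1 - \<alpha>) * (c * d) \<le> ?q (?y e)" if "e \<in> M" for e
      using edge_vector_form[OF \<alpha>, of e c d] cd ME that by auto
    then have "(\<Sum>e\<in>M. \<alpha> - 2 * (1 - \<alpha>) * (c * d)) \<le> (\<Sum>e\<in>M. ?q (?y e))" by (rule sum_mono)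
    then show ?thesis using M(2) by simp
  qed
  ultimately show ?thesis using side_vector_form[of a b \<alpha>] by linarith
qed

lemma S_k_A_alpha_bipartite_lower_bound:
  assumes E: "E \<noteq> {}" and \<alpha>: "0 \<le> \<alpha>" and k: "1 \<le> k" "k \<le> matching_number E + 1"
  shows "S_k k (A_alpha \<alpha> n E) \<ge>
    \<alpha> * real (card E) / 2 * (1 / real (card X) + 1 / real (card Y))
    + (1 - \<alpha>) * real (card E) / sqrt (real (card X) * real (card Y))
    + (real k - 1) * (\<alpha> - 2 * (1 - \<alpha>) * sqrt (real (card X) * real (card Y))
                                / (real (card X) + real (card Y)))"
proof -
  obtain e where "e \<in> E" using E by blast
  then obtain u w where "u \<in> X" "w \<in> Y" using bipartite_edgeE[OF sg bp] by metis
  moreover have "finite X" "finite Y" using bp unfolding bipartition_def by (metis finite_Un finite_atLeastLessThan)+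
  ultimately have s: "0 < real (card X)" and t: "0 < real (card Y)" by (auto simp: card_gt_0_iff)
  obtain a b c d where w: "real (card X) * a\<^sup>2 + real (card Y) * b\<^sup>2 = 1" "c\<^sup>2 + d\<^sup>2 = 1" "a * c = b * d"
    "a\<^sup>2 + b\<^sup>2 = (1 / real (card X) + 1 / real (card Y)) / 2"
    "2 * (a * b) = 1 / sqrt (real (card X) * real (card Y))"
    "c * d = sqrt (real (card X) * real (card Y)) / (real (card X) + real (card Y))"
    using bipartite_weights[OF s t] by blast
  have "Suc (k - 1) = k" and "real (k - 1) = real k - 1" using k by auto
  with S_k_A_alpha_ge_test_vectors[OF \<alpha> _ w(1-3), of "k - 1"] k show ?thesis
    unfolding w(4-6) by simp
qed

end

lemma S_k_A_alpha_edgeless: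
  assumes "1 \<le> n"
  shows "0 \<le> S_k 1 (A_alpha \<alpha> n {})"
proof -
  have "orthonormal n [unit_vec n 0]" using assms unfolding orthonormal_def by auto
  from ky_fan[OF A_alpha_carrier A_alpha_symmetric this]
  have "unit_vec n 0 \<bullet> (A_alpha \<alpha> n {} *\<^sub>v unit_vec n 0) \<le> S_k 1 (A_alpha \<alpha> n {})" by simp
  moreover have "unit_vec n 0 \<bullet> (A_alpha \<alpha> n {} *\<^sub>v unit_vec n 0) = 0"
    unfolding unit_vec_def by (subst A_alpha_quadratic_form) (auto simp: simple_graph_def)
  ultimately show ?thesis by simp
qed

theorem theorem5p3:
  fixes n :: nat and E :: "nat set set" and X Y :: "nat set" and \<alpha> :: real and k :: nat
  assumes "simple_graph n E"
    and "connected_graph n E"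
    and "bipartition n E X Y"
    and "0 \<le> \<alpha>" and "\<alpha> \<le> 1"
    and "1 \<le> k" and "k \<le> matching_number E + 1"
  shows "S_k k (A_alpha \<alpha> n E) \<ge>
    \<alpha> * real (card E) / 2 * (1 / real (card X) + 1 / real (card Y))
    + (1 - \<alpha>) * real (card E) / sqrt (real (card X) * real (card Y))
    + (real k - 1) * (\<alpha> - 2 * (1 - \<alpha>) * sqrt (real (card X) * real (card Y))
                                / (real (card X) + real (card Y)))"
proof (cases "E = {}")
  case True
  then have "k = 1" using assms(6,7) by (simp add: matching_number_empty)
  \<comment> \<open>the only use of connectedness\<close>
  moreover have "1 \<le> n" using assms(2) unfolding connected_graph_def by simp
  ultimately show ?thesis using S_k_A_alpha_edgeless True by simp
next
  case False
  show ?thesis by (rule S_k_A_alpha_bipartite_lower_bound[OF assms(1,3) False assms(4,6,7)])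
qed

end
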